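(* For each $\kappa>0$ let $\mathcal G_\kappa=\{g_{H,\kappa}:H\in\mathcal P((0,\infty))\}$, where $$g_{H,\kappa}(\theta)=\int\frac{\lambda^\kappa}{\Gamma(\kappa)}\theta^{\kappa-1}e^{-\lambda\theta}\,dH(\lambda),\qquad\theta>0.$$ Then for any $0<\kappa<\kappa'$, $\mathcal G_\kappa\subseteq\mathcal G_{\kappa'}$.
   Context: $\mathcal P((0,\infty))$ denotes the set of probability measures on $(0,\infty)$. *)

theory Defs
  imports "HOL-Probability.Probability"
begin

text \<open>Probability measures on (0,infinity), represented as Borel probability
measures on the reals giving zero mass to (-infinity,0].\<close>
definition prob_pos :: "real measure set" where
  "prob_pos = {H. prob_space H \<and> sets H = sets borel \<and> emeasure H {..0} = 0}"

definition gmix :: "real measure \<Rightarrow> real \<Rightarrow> real \<Rightarrow> real" where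
  "gmix H \<kappa> \<theta> =
     (\<integral>l. l powr \<kappa> / Gamma \<kappa> * \<theta> powr (\<kappa> - 1) * exp (- l * \<theta>) \<partial>H)"

definition Gclass :: "real \<Rightarrow> (real \<Rightarrow> real) set" where
  "Gclass \<kappa> = {(\<lambda>\<theta>. if \<theta> > 0 then gmix H \<kappa> \<theta> else 0) | H. H \<in> prob_pos}"

end

theory Submission
  imports Defs
begin

text \<open>A Gamma variable of shape \<kappa> and rate \<lambda> has the law of a Gamma variable of shape \<kappa>'
  and rate \<lambda>(1 + T), where T is independent of it and beta-prime distributed with parameters
  \<kappa>' - \<kappa> and \<kappa>. On densities this is the identity
  \<integral> gamma_density \<kappa>' (\<lambda>(1 + t)) \<theta> \<cdot> p(t) dt = gamma_density \<kappa> \<lambda> \<theta>,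
  which reduces to a single Gamma integral in t. Hence the mixture of Gamma(\<kappa>) densities
  over H equals the mixture of Gamma(\<kappa>') densities over the law of \<Lambda>(1 + T), with
  \<Lambda> \<sim> H independent of T. That the beta-prime density integrates to 1 comes for free:
  integrate the identity over \<theta> and swap the integrals.\<close>

definition gamma_density :: "real \<Rightarrow> real \<Rightarrow> real \<Rightarrow> real" where
  "gamma_density \<kappa> l \<theta> = l powr \<kappa> / Gamma \<kappa> * \<theta> powr (\<kappa> - 1) * exp (- l * \<theta>)"

lemma gamma_density_nonneg: "\<kappa> > 0 \<Longrightarrow> gamma_density \<kappa> l \<theta> \<ge> 0"
  by (simp add: gamma_density_def)

lemma borel_measurable_gamma_density [measurable]: "(\<lambda>l. gamma_density \<kappa> l \<theta>) \<in> borel_measurable borel"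
  unfolding gamma_density_def by measurable

lemma nn_integral_powr_exp:
  fixes s c :: real
  assumes s: "s > 0" and c: "c > 0"
  shows "(\<integral>\<^sup>+t. ennreal (indicator {0<..} t * t powr (s - 1) * exp (- (c * t))) \<partial>lborel)
         = ennreal (Gamma s * c powr (- s))"
proof -
  define I where "I = (\<integral>\<^sup>+t. ennreal (indicator {0<..} t * t powr (s - 1) * exp (- (c * t))) \<partial>lborel)"
  have "ennreal (Gamma s) = (\<integral>\<^sup>+t. ennreal (indicator {0..} t * t powr (s - 1) / exp t) \<partial>lborel)"
    using Gamma_conv_nn_integral_real[OF s] .
  also have "\<dots> = ennreal \<bar>c\<bar> * (\<integral>\<^sup>+t. ennreal (indicator {0..} (0 + c * t) * (0 + c * t) powr (s - 1) / exp (0 + c * t)) \<partial>lborel)"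
    by (rule nn_integral_real_affine) (use c in auto)
  also have "(\<integral>\<^sup>+t. ennreal (indicator {0..} (0 + c * t) * (0 + c * t) powr (s - 1) / exp (0 + c * t)) \<partial>lborel)
      = (\<integral>\<^sup>+t. ennreal (c powr (s - 1)) * ennreal (indicator {0<..} t * t powr (s - 1) * exp (- (c * t))) \<partial>lborel)"
  proof (rule nn_integral_cong)
    fix t :: real
    show "ennreal (indicator {0..} (0 + c * t) * (0 + c * t) powr (s - 1) / exp (0 + c * t))
      = ennreal (c powr (s - 1)) * ennreal (indicator {0<..} t * t powr (s - 1) * exp (- (c * t)))"
    proof (cases "t > 0")
      case True
      then show ?thesis using c
        by (simp add: ennreal_mult'[symmetric] powr_mult exp_minus field_simps indicator_def)
    next
      case False
      then show ?thesis using c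
        by (auto simp: indicator_def zero_le_mult_iff)
    qed
  qed
  also have "\<dots> = ennreal (c powr (s - 1)) * I"
    unfolding I_def by (rule nn_integral_cmult) simp
  finally have "ennreal (Gamma s) = ennreal (c powr s) * I"
    using c by (simp add: powr_diff field_simps mult.assoc[symmetric] flip: ennreal_mult)
  then have "ennreal (Gamma s * c powr (- s)) = ennreal (c powr (- s) * c powr s) * I"
    using c Gamma_real_pos[OF s] by (simp add: ennreal_mult mult.commute mult.left_commute)
  then show ?thesis
    using c by (simp add: I_def powr_minus)
qed

lemma nn_integral_gamma_density:
  fixes \<kappa> l :: real
  assumes \<kappa>: "\<kappa> > 0" and l: "l > 0"
  shows "(\<integral>\<^sup>+\<theta>. ennreal (indicator {0<..} \<theta> * gamma_density \<kappa> l \<theta>) \<partial>lborel) = 1"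
proof -
  have "(\<integral>\<^sup>+\<theta>. ennreal (indicator {0<..} \<theta> * gamma_density \<kappa> l \<theta>) \<partial>lborel)
      = (\<integral>\<^sup>+\<theta>. ennreal (l powr \<kappa> / Gamma \<kappa>) *
                 ennreal (indicator {0<..} \<theta> * \<theta> powr (\<kappa> - 1) * exp (- l * \<theta>)) \<partial>lborel)"
    using \<kappa> by (intro nn_integral_cong) (simp add: gamma_density_def indicator_def flip: ennreal_mult)
  also have "\<dots> = ennreal (l powr \<kappa> / Gamma \<kappa>) * ennreal (Gamma \<kappa> * l powr (- \<kappa>))"
    using nn_integral_powr_exp[OF \<kappa> l] by (simp add: nn_integral_cmult)
  also have "\<dots> = 1"
  proof -
    have "Gamma \<kappa> > 0"
      using \<kappa> by (rule Gamma_real_pos)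
    moreover from this have "l powr \<kappa> / Gamma \<kappa> * (Gamma \<kappa> * l powr (- \<kappa>)) = 1"
      using l by (simp add: powr_minus)
    ultimately show ?thesis
      by (subst ennreal_mult[symmetric]) auto
  qed
  finally show ?thesis .
qed

definition beta_prime_density :: "real \<Rightarrow> real \<Rightarrow> real \<Rightarrow> real" where
  "beta_prime_density a b t = indicator {0<..} t * t powr (a - 1) * (1 + t) powr (- (a + b)) / Beta a b"

lemma Beta_real_pos: "a > 0 \<Longrightarrow> b > 0 \<Longrightarrow> Beta a b > (0::real)"
  by (simp add: Beta_def Gamma_real_pos)

lemma beta_prime_density_nonneg: "a > 0 \<Longrightarrow> b > 0 \<Longrightarrow> beta_prime_density a b t \<ge> 0"
  by (simp add: beta_prime_density_def Beta_real_pos less_imp_le)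

lemma borel_measurable_beta_prime_density [measurable]: "beta_prime_density a b \<in> borel_measurable borel"
  unfolding beta_prime_density_def by measurable

lemma gamma_density_beta_prime_mixture:
  fixes \<kappa> \<kappa>' l \<theta> :: real
  assumes \<kappa>: "0 < \<kappa>" "\<kappa> < \<kappa>'" and l: "l > 0" and \<theta>: "\<theta> > 0"
  shows "(\<integral>\<^sup>+t. ennreal (beta_prime_density (\<kappa>' - \<kappa>) \<kappa> t * gamma_density \<kappa>' (l * (1 + t)) \<theta>) \<partial>lborel)
         = ennreal (gamma_density \<kappa> l \<theta>)"
proof -
  define d where "d = \<kappa>' - \<kappa>"
  have d: "d > 0" and \<kappa>'_eq: "\<kappa>' = d + \<kappa>"
    using \<kappa> by (simp_all add: d_def)
  have Gamma_pos: "Gamma \<kappa>' > 0"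
    using \<kappa> by simp
  have Beta_eq: "Beta d \<kappa> * Gamma \<kappa>' = Gamma d * Gamma \<kappa>"
    using \<kappa>'_eq Gamma_pos by (simp add: Beta_def)
  define A where "A = l powr \<kappa>' * \<theta> powr (\<kappa>' - 1) * exp (- l * \<theta>) / (Beta d \<kappa> * Gamma \<kappa>')"
  have A: "A \<ge> 0"
    unfolding A_def using Beta_real_pos[OF d \<kappa>(1)] Gamma_pos
    by (intro divide_nonneg_pos mult_nonneg_nonneg mult_pos_pos) auto
  \<comment> \<open>the factor (1 + t) powr \<kappa>' of the rate cancels against the beta-prime density\<close>
  have integrand: "beta_prime_density d \<kappa> t * gamma_density \<kappa>' (l * (1 + t)) \<theta>
      = A * (indicator {0<..} t * t powr (d - 1) * exp (- (l * \<theta>) * t))" for t :: real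
  proof (cases "t > 0")
    case True
    have "(l * (1 + t)) powr \<kappa>' * (1 + t) powr (- \<kappa>') = l powr \<kappa>'"
      using True l by (simp add: powr_mult powr_minus)
    moreover have "exp (- (l * (1 + t)) * \<theta>) = exp (- l * \<theta>) * exp (- (l * \<theta>) * t)"
      by (simp add: algebra_simps flip: exp_add)
    ultimately show ?thesis
      using True \<kappa>'_eq by (simp add: beta_prime_density_def gamma_density_def A_def field_simps)
  qed (simp add: beta_prime_density_def)
  have "(\<integral>\<^sup>+t. ennreal (beta_prime_density d \<kappa> t * gamma_density \<kappa>' (l * (1 + t)) \<theta>) \<partial>lborel)
      = (\<integral>\<^sup>+t. ennreal A * ennreal (indicator {0<..} t * t powr (d - 1) * exp (- (l * \<theta> * t))) \<partial>lborel)"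
    unfolding integrand by (simp only: ennreal_mult'[OF A] mult_minus_left)
  also have "\<dots> = ennreal A * ennreal (Gamma d * (l * \<theta>) powr (- d))"
    using nn_integral_powr_exp[OF d, of "l * \<theta>"] l \<theta> by (simp add: nn_integral_cmult)
  also have "\<dots> = ennreal (A * (Gamma d * (l * \<theta>) powr (- d)))"
    using A d by (simp add: ennreal_mult)
  also have "A * (Gamma d * (l * \<theta>) powr (- d)) = gamma_density \<kappa> l \<theta>"
  proof -
    have "Gamma d \<noteq> 0" "Gamma \<kappa> \<noteq> 0"
      using Gamma_real_pos[OF d] Gamma_real_pos[OF \<kappa>(1)] by linarith+
    moreover have "l powr \<kappa>' * l powr (- d) = l powr \<kappa>" "\<theta> powr (\<kappa>' - 1) * \<theta> powr (- d) = \<theta> powr (\<kappa> - 1)"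
      using \<kappa>'_eq by (simp_all flip: powr_add)
    ultimately show ?thesis
      using l \<theta> Beta_eq Gamma_pos
      by (simp add: A_def gamma_density_def powr_mult field_simps) (metis mult.assoc mult.left_commute)
  qed
  finally show ?thesis
    by (simp add: d_def)
qed

lemma nn_integral_beta_prime_density:
  fixes a b :: real
  assumes a: "a > 0" and b: "b > 0"
  shows "(\<integral>\<^sup>+t. ennreal (beta_prime_density a b t) \<partial>lborel) = 1"
proof -
  define F where "F t \<theta> = ennreal (beta_prime_density a b t * (indicator {0<..} \<theta> * gamma_density (a + b) (1 + t) \<theta>))"
    for t \<theta> :: real
  have F_measurable: "case_prod F \<in> borel_measurable (lborel \<Otimes>\<^sub>M lborel)"
    unfolding F_def beta_prime_density_def gamma_density_def by measurable
  have ab: "a + b > 0"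
    using a b by simp
  have integral_\<theta>: "(\<integral>\<^sup>+\<theta>. F t \<theta> \<partial>lborel) = ennreal (beta_prime_density a b t)" for t
  proof (cases "t > 0")
    case True
    have "F t \<theta> = ennreal (beta_prime_density a b t) *
                  ennreal (indicator {0<..} \<theta> * gamma_density (a + b) (1 + t) \<theta>)" for \<theta>
      unfolding F_def by (rule ennreal_mult'[OF beta_prime_density_nonneg[OF a b]])
    moreover have "(\<lambda>\<theta>. ennreal (indicator {0<..} \<theta> * gamma_density (a + b) (1 + t) \<theta>)) \<in> borel_measurable lborel"
      unfolding gamma_density_def by measurable
    ultimately have "(\<integral>\<^sup>+\<theta>. F t \<theta> \<partial>lborel)
        = ennreal (beta_prime_density a b t) *
          (\<integral>\<^sup>+\<theta>. ennreal (indicator {0<..} \<theta> * gamma_density (a + b) (1 + t) \<theta>) \<partial>lborel)"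
      by (simp add: nn_integral_cmult)
    then show ?thesis
      using True ab by (simp add: nn_integral_gamma_density)
  qed (simp add: F_def beta_prime_density_def)
  have integral_t: "(\<integral>\<^sup>+t. F t \<theta> \<partial>lborel) = ennreal (indicator {0<..} \<theta> * gamma_density b 1 \<theta>)" for \<theta>
  proof (cases "\<theta> > 0")
    case True
    then show ?thesis
      using gamma_density_beta_prime_mixture[of b "a + b" 1 \<theta>] a b by (simp add: F_def)
  qed (simp add: F_def)
  have "1 = (\<integral>\<^sup>+\<theta>. ennreal (indicator {0<..} \<theta> * gamma_density b 1 \<theta>) \<partial>lborel)"
    using b by (simp add: nn_integral_gamma_density)
  also have "\<dots> = (\<integral>\<^sup>+\<theta>. \<integral>\<^sup>+t. F t \<theta> \<partial>lborel \<partial>lborel)"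
    by (simp add: integral_t)
  also have "\<dots> = (\<integral>\<^sup>+t. \<integral>\<^sup>+\<theta>. F t \<theta> \<partial>lborel \<partial>lborel)"
    using lborel_pair.Fubini'[OF F_measurable] by simp
  also have "\<dots> = (\<integral>\<^sup>+t. ennreal (beta_prime_density a b t) \<partial>lborel)"
    by (simp add: integral_\<theta>)
  finally show ?thesis ..
qed

definition beta_prime :: "real \<Rightarrow> real \<Rightarrow> real measure" where
  "beta_prime a b = density lborel (\<lambda>t. ennreal (beta_prime_density a b t))"

lemma beta_prime_in_prob_pos:
  fixes a b :: real
  assumes "a > 0" and "b > 0"
  shows "beta_prime a b \<in> prob_pos"
  unfolding prob_pos_def
proof (intro CollectI conjI)
  show "prob_space (beta_prime a b)"
    by (rule prob_spaceI) (simp add: beta_prime_def emeasure_density nn_integral_beta_prime_density assms)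
  show "sets (beta_prime a b) = sets borel"
    by (simp add: beta_prime_def)
  have "emeasure (beta_prime a b) {..0} = (\<integral>\<^sup>+t. ennreal (beta_prime_density a b t) * indicator {..0} t \<partial>lborel)"
    unfolding beta_prime_def by (rule emeasure_density) auto
  also have "\<dots> = (\<integral>\<^sup>+(t::real). 0 \<partial>lborel)"
    by (rule nn_integral_cong) (simp add: beta_prime_density_def indicator_def)
  finally show "emeasure (beta_prime a b) {..0} = 0"
    by simp
qed

definition scale_mixture :: "real measure \<Rightarrow> real measure \<Rightarrow> real measure" where
  "scale_mixture H P = distr (H \<Otimes>\<^sub>M P) borel (\<lambda>(l, t). l * (1 + t))"

lemma AE_pos_if_prob_pos: "H \<in> prob_pos \<Longrightarrow> AE l in H. l > 0"
  by (rule AE_I'[of "{..0}"]) (auto simp: prob_pos_def null_sets_def)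

lemma nn_integral_scale_mixture:
  fixes u :: "real \<Rightarrow> ennreal"
  assumes H: "sets H = sets borel" and P: "sets P = sets borel" "sigma_finite_measure P"
    and u: "u \<in> borel_measurable borel"
  shows "(\<integral>\<^sup>+m. u m \<partial>scale_mixture H P) = (\<integral>\<^sup>+l. \<integral>\<^sup>+t. u (l * (1 + t)) \<partial>P \<partial>H)"
proof -
  interpret P: sigma_finite_measure P by (rule P(2))
  note [measurable_cong] = H P(1) and [measurable] = u
  have "(\<integral>\<^sup>+m. u m \<partial>scale_mixture H P) = (\<integral>\<^sup>+x. u (case x of (l, t) \<Rightarrow> l * (1 + t)) \<partial>(H \<Otimes>\<^sub>M P))"
    unfolding scale_mixture_def by (subst nn_integral_distr) auto
  also have "\<dots> = (\<integral>\<^sup>+l. \<integral>\<^sup>+t. u (l * (1 + t)) \<partial>P \<partial>H)"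
    by (subst P.nn_integral_fst[symmetric]) auto
  finally show ?thesis .
qed

lemma scale_mixture_in_prob_pos:
  assumes H: "H \<in> prob_pos" and P: "P \<in> prob_pos"
  shows "scale_mixture H P \<in> prob_pos"
  unfolding prob_pos_def
proof (intro CollectI conjI)
  interpret H: prob_space H using H by (simp add: prob_pos_def)
  interpret P: prob_space P using P by (simp add: prob_pos_def)
  interpret HP: pair_prob_space H P ..
  have sets: "sets H = sets borel" "sets P = sets borel"
    using H P by (simp_all add: prob_pos_def)
  note [measurable_cong] = sets
  show "prob_space (scale_mixture H P)"
    unfolding scale_mixture_def by (rule HP.prob_space_distr) simp
  show "sets (scale_mixture H P) = sets borel"
    by (simp add: scale_mixture_def)
  have "emeasure (scale_mixture H P) {..0} = (\<integral>\<^sup>+l. \<integral>\<^sup>+t. indicator {..0} (l * (1 + t)) \<partial>P \<partial>H)"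
    using nn_integral_scale_mixture[OF sets P.sigma_finite_measure_axioms, of "indicator {..0}"]
    by (simp add: scale_mixture_def)
  also have "\<dots> = (\<integral>\<^sup>+l. 0 \<partial>H)"
    using AE_pos_if_prob_pos[OF H]
  proof (intro nn_integral_cong_AE, eventually_elim)
    case (elim l)
    have "indicator {..0} (l * (1 + t)) = (0::ennreal)" if "t > 0" for t
      using elim that by (simp add: indicator_def not_le)
    then show ?case
      using AE_pos_if_prob_pos[OF P]
      by (subst nn_integral_cong_AE[where v = "\<lambda>_. 0"]) (auto elim!: eventually_mono simp: elim)
  qed
  finally show "emeasure (scale_mixture H P) {..0} = 0"
    by simp
qed

lemma gmix_eq_nn_integral:
  assumes "sets H = sets borel" and "\<kappa> > 0"
  shows "gmix H \<kappa> \<theta> = enn2real (\<integral>\<^sup>+l. ennreal (gamma_density \<kappa> l \<theta>) \<partial>H)"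
proof -
  note [measurable_cong] = assms(1)
  have "gmix H \<kappa> \<theta> = (\<integral>l. gamma_density \<kappa> l \<theta> \<partial>H)"
    by (simp add: gmix_def gamma_density_def)
  also have "\<dots> = enn2real (\<integral>\<^sup>+l. ennreal (gamma_density \<kappa> l \<theta>) \<partial>H)"
    using assms(2) by (subst integral_eq_nn_integral) (auto simp: gamma_density_nonneg)
  finally show ?thesis .
qed

lemma gmix_scale_mixture_beta_prime:
  fixes \<kappa> \<kappa>' \<theta> :: real
  assumes H: "H \<in> prob_pos" and \<kappa>: "0 < \<kappa>" "\<kappa> < \<kappa>'" and \<theta>: "\<theta> > 0"
  shows "gmix (scale_mixture H (beta_prime (\<kappa>' - \<kappa>) \<kappa>)) \<kappa>' \<theta> = gmix H \<kappa> \<theta>"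
proof -
  define P where "P = beta_prime (\<kappa>' - \<kappa>) \<kappa>"
  have P: "P \<in> prob_pos"
    using \<kappa> by (simp add: P_def beta_prime_in_prob_pos)
  have sets: "sets H = sets borel" "sets P = sets borel"
    using H P by (simp_all add: prob_pos_def)
  have "(\<integral>\<^sup>+m. ennreal (gamma_density \<kappa>' m \<theta>) \<partial>scale_mixture H P)
      = (\<integral>\<^sup>+l. \<integral>\<^sup>+t. ennreal (gamma_density \<kappa>' (l * (1 + t)) \<theta>) \<partial>P \<partial>H)"
    using P by (intro nn_integral_scale_mixture sets prob_space_imp_sigma_finite) (auto simp: prob_pos_def)
  also have "\<dots> = (\<integral>\<^sup>+l. \<integral>\<^sup>+t. ennreal (beta_prime_density (\<kappa>' - \<kappa>) \<kappa> t * gamma_density \<kappa>' (l * (1 + t)) \<theta>) \<partial>lborel \<partial>H)"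
    using \<kappa> by (simp add: P_def beta_prime_def nn_integral_density beta_prime_density_nonneg
        gamma_density_nonneg ennreal_mult)
  also have "\<dots> = (\<integral>\<^sup>+l. ennreal (gamma_density \<kappa> l \<theta>) \<partial>H)"
    using AE_pos_if_prob_pos[OF H]
    by (intro nn_integral_cong_AE) (auto elim!: eventually_mono simp: gamma_density_beta_prime_mixture \<kappa> \<theta>)
  finally show ?thesis
    using \<kappa> sets by (simp add: gmix_eq_nn_integral scale_mixture_def P_def)
qed

theorem lemma5p1:
  fixes \<kappa> \<kappa>' :: real
  assumes "0 < \<kappa>" and "\<kappa> < \<kappa>'"
  shows "Gclass \<kappa> \<subseteq> Gclass \<kappa>'"
proof
  fix g
  assume "g \<in> Gclass \<kappa>"
  then obtain H where H: "H \<in> prob_pos" and g: "g = (\<lambda>\<theta>. if \<theta> > 0 then gmix H \<kappa> \<theta> else 0)"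
    unfolding Gclass_def by blast
  define H' where "H' = scale_mixture H (beta_prime (\<kappa>' - \<kappa>) \<kappa>)"
  have "H' \<in> prob_pos"
    using H assms by (simp add: H'_def scale_mixture_in_prob_pos beta_prime_in_prob_pos)
  moreover have "g = (\<lambda>\<theta>. if \<theta> > 0 then gmix H' \<kappa>' \<theta> else 0)"
    using gmix_scale_mixture_beta_prime[OF H assms] by (auto simp: g H'_def)
  ultimately show "g \<in> Gclass \<kappa>'"
    unfolding Gclass_def by blast
qed

end
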